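(* For every $n\geq1$, the RBM variety $V^1_n$ coincides with the first secant variety (the Zariski closure of the union of all secant lines) of the Segre embedding of $(\mathbb{P}^1)^n$ into $\mathbb{P}^{2^n-1}$, and the tropical RBM variety $TV^1_n$ is the tropicalization of that secant variety.
   Context: The RBM model $M^1_n$ is the subset of the open simplex $\Delta_{2^n-1}$ consisting of all vectors $(p(v))_{v\in\{0,1\}^n}$ with $p(v)=\frac1Z\beta_1^{v_1}\cdots\beta_n^{v_n}(1+\gamma\,\omega_1^{v_1}\cdots\omega_n^{v_n})$, where all parameters range over $\mathbb{R}_{>0}$ and $Z$ normalizes the coordinates to sum to one. The RBM variety $V^1_n$ is the Zariski closure of $M^1_n$ in the complex projective space $\mathbb{P}^{2^n-1}$ (coordinates indexed by $v\in\{0,1\}^n$), and the tropical RBM variety $TV^1_n\subseteq\mathbb{R}^{2^n}/\mathbb{R}(1,\dots,1)$ is the tropicalization of $V^1_n$, i.e. the intersection of the tropical hypersurfaces of all polynomials vanishing on $V^1_n$. The Segre embedding sends $((x_0^{(1)}:x_1^{(1)}),\dots,(x_0^{(n)}:x_1^{(n)}))$ to the point with coordinates $\prod_i x^{(i)}_{v_i}$, $v\in\{0,1\}^n$. *)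

theory Defs
  imports "HOL-Analysis.Analysis" "HOL-Library.Poly_Mapping"
begin

text \<open>Index set \{0,1\}^n: lists of length n with entries 0 or 1 (entry i is v_(i+1)).\<close>
definition cube :: "nat \<Rightarrow> nat list set" where
  "cube n = {v. length v = n \<and> (\<forall>i<n. v ! i \<le> 1)}"

text \<open>Vectors in C^(2^n): functions on index lists, zero outside the cube.\<close>
definition pts :: "nat \<Rightarrow> (nat list \<Rightarrow> complex) set" where
  "pts n = {x. \<forall>v. v \<notin> cube n \<longrightarrow> x v = 0}"

type_synonym mpoly = "(nat list \<Rightarrow>\<^sub>0 nat) \<Rightarrow>\<^sub>0 complex"

definition peval :: "mpoly \<Rightarrow> (nat list \<Rightarrow> complex) \<Rightarrow> complex" where
  "peval f x = (\<Sum>m\<in>Poly_Mapping.keys f. Poly_Mapping.lookup f m * (\<Prod>v\<in>Poly_Mapping.keys m. x v ^ Poly_Mapping.lookup m v))"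

definition poly_in :: "nat \<Rightarrow> mpoly \<Rightarrow> bool" where
  "poly_in n f \<longleftrightarrow> (\<forall>m\<in>Poly_Mapping.keys f. Poly_Mapping.keys m \<subseteq> cube n)"

definition homogeneous :: "mpoly \<Rightarrow> bool" where
  "homogeneous f \<longleftrightarrow> (\<exists>d. \<forall>m\<in>Poly_Mapping.keys f. (\<Sum>v\<in>Poly_Mapping.keys m. Poly_Mapping.lookup m v) = d)"

text \<open>Zariski closure in P^(2^n-1); projective points represented by their nonzero
  representative vectors (so the result is closed under nonzero scaling).\<close>
definition zariski_closure :: "nat \<Rightarrow> (nat list \<Rightarrow> complex) set \<Rightarrow> (nat list \<Rightarrow> complex) set" where
  "zariski_closure n S = {x \<in> pts n. (\<exists>v. x v \<noteq> 0) \<and>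
     (\<forall>f. poly_in n f \<and> homogeneous f \<and> (\<forall>y\<in>S. peval f y = 0) \<longrightarrow> peval f x = 0)}"

definition rbm_model :: "nat \<Rightarrow> (nat list \<Rightarrow> complex) set" where
  "rbm_model n = {p. \<exists>(\<beta>::nat \<Rightarrow> real) (\<omega>::nat \<Rightarrow> real) (\<gamma>::real).
     (\<forall>i<n. \<beta> i > 0 \<and> \<omega> i > 0) \<and> \<gamma> > 0 \<and>
     (let u = (\<lambda>v. (\<Prod>i<n. \<beta> i ^ (v ! i)) * (1 + \<gamma> * (\<Prod>i<n. \<omega> i ^ (v ! i))));
          Z = (\<Sum>v\<in>cube n. u v)
      in p = (\<lambda>v. if v \<in> cube n then complex_of_real (u v / Z) else 0))}"

definition rbm_variety :: "nat \<Rightarrow> (nat list \<Rightarrow> complex) set" where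
  "rbm_variety n = zariski_closure n (rbm_model n)"

definition segre :: "nat \<Rightarrow> (nat list \<Rightarrow> complex) set" where
  "segre n = {x. \<exists>a b :: nat \<Rightarrow> complex. (\<forall>i<n. a i \<noteq> 0 \<or> b i \<noteq> 0) \<and>
     x = (\<lambda>v. if v \<in> cube n then (\<Prod>i<n. if v ! i = 0 then a i else b i) else 0)}"

definition secant_union :: "nat \<Rightarrow> (nat list \<Rightarrow> complex) set" where
  "secant_union n = {x. (\<exists>v. x v \<noteq> 0) \<and> (\<exists>s\<in>segre n. \<exists>t\<in>segre n. (\<forall>c::complex. s \<noteq> (\<lambda>v. c * t v)) \<and>
     (\<exists>c1 c2 :: complex. x = (\<lambda>v. c1 * s v + c2 * t v)))}"

definition secant_variety :: "nat \<Rightarrow> (nat list \<Rightarrow> complex) set" where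
  "secant_variety n = zariski_closure n (secant_union n)"

text \<open>Tropical hypersurface of a polynomial over C (trivial valuation), min convention.\<close>
definition wdot :: "(nat list \<Rightarrow> real) \<Rightarrow> (nat list \<Rightarrow>\<^sub>0 nat) \<Rightarrow> real" where
  "wdot w m = (\<Sum>v\<in>Poly_Mapping.keys m. w v * real (Poly_Mapping.lookup m v))"

definition trop_hypersurface :: "mpoly \<Rightarrow> (nat list \<Rightarrow> real) set" where
  "trop_hypersurface f = {w. \<exists>m1\<in>Poly_Mapping.keys f. \<exists>m2\<in>Poly_Mapping.keys f. m1 \<noteq> m2 \<and>
     wdot w m1 = wdot w m2 \<and> (\<forall>m\<in>Poly_Mapping.keys f. wdot w m1 \<le> wdot w m)}"

text \<open>Weight vectors live in R^(2^n) (zero outside the cube);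
  the resulting set is invariant under adding multiples of (1,...,1), i.e. it is the full preimage
  of the subset of R^(2^n)/R(1,...,1).\<close>
definition tropicalization :: "nat \<Rightarrow> (nat list \<Rightarrow> complex) set \<Rightarrow> (nat list \<Rightarrow> real) set" where
  "tropicalization n X = {w. (\<forall>v. v \<notin> cube n \<longrightarrow> w v = 0) \<and>
     (\<forall>f. poly_in n f \<and> f \<noteq> 0 \<and> (\<forall>x\<in>X. peval f x = 0) \<longrightarrow> w \<in> trop_hypersurface f)}"

end

theory Submission
  imports Defs "HOL-Computational_Algebra.Polynomial"
begin

text \<open>A point of the RBM model is, up to its normalization, \<open>s + \<gamma> t\<close> for the Segre points
  \<open>s = \<otimes>(1, \<beta>\<^sub>i)\<close> and \<open>t = \<otimes>(1, \<beta>\<^sub>i \<omega>\<^sub>i)\<close>, so the model lies in the union of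
  secant lines. Conversely, the cone over the secant lines is parametrized polynomially by two
  Segre points and two coefficients, and for positive real parameters the parametrization is a
  positive multiple of a model point. A homogeneous polynomial vanishing on the model therefore
  vanishes on the positive real parameters, hence, by the identity theorem for polynomials in
  each variable, on all complex parameters. So the model and the union of secant lines are cut
  out by the same homogeneous polynomials, and their closures (and tropicalizations) agree.\<close>

definition is_poly_fun :: "(complex \<Rightarrow> complex) \<Rightarrow> bool" where
  "is_poly_fun h \<longleftrightarrow> (\<exists>p. \<forall>z. h z = poly p z)"

lemma is_poly_fun_const [simp]: "is_poly_fun (\<lambda>z. c)"
  unfolding is_poly_fun_def by (rule exI[of _ "[:c:]"]) simp

lemma is_poly_fun_id [simp]: "is_poly_fun (\<lambda>z. z)"
  unfolding is_poly_fun_def by (rule exI[of _ "[:0, 1:]"]) simp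

lemma is_poly_fun_add: "is_poly_fun f \<Longrightarrow> is_poly_fun g \<Longrightarrow> is_poly_fun (\<lambda>z. f z + g z)"
  unfolding is_poly_fun_def by (metis poly_add)

lemma is_poly_fun_mult: "is_poly_fun f \<Longrightarrow> is_poly_fun g \<Longrightarrow> is_poly_fun (\<lambda>z. f z * g z)"
  unfolding is_poly_fun_def by (metis poly_mult)

lemma is_poly_fun_power: "is_poly_fun f \<Longrightarrow> is_poly_fun (\<lambda>z. f z ^ k)"
  by (induction k) (auto intro: is_poly_fun_mult)

lemma is_poly_fun_if: "is_poly_fun f \<Longrightarrow> is_poly_fun g \<Longrightarrow> is_poly_fun (\<lambda>z. if P then f z else g z)"
  by (cases P) auto

lemma is_poly_fun_sum:
  "(\<And>a. a \<in> A \<Longrightarrow> is_poly_fun (f a)) \<Longrightarrow> is_poly_fun (\<lambda>z. \<Sum>a\<in>A. f a z)"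
  by (induction A rule: infinite_finite_induct) (auto intro: is_poly_fun_add)

lemma is_poly_fun_prod:
  "(\<And>a. a \<in> A \<Longrightarrow> is_poly_fun (f a)) \<Longrightarrow> is_poly_fun (\<lambda>z. \<Prod>a\<in>A. f a z)"
  by (induction A rule: infinite_finite_induct) (auto intro: is_poly_fun_mult)

lemma is_poly_fun_fun_upd: "is_poly_fun (\<lambda>z. (u(k := z)) j)"
  by (cases "j = k") auto

lemma is_poly_fun_peval:
  assumes "\<And>v. is_poly_fun (\<lambda>z. X z v)"
  shows "is_poly_fun (\<lambda>z. peval f (X z))"
  unfolding peval_def
  using assms by (intro is_poly_fun_sum is_poly_fun_mult is_poly_fun_prod is_poly_fun_power) auto

lemma is_poly_fun_eq_0_on_infinite:
  assumes "is_poly_fun h" "infinite S" "\<And>z. z \<in> S \<Longrightarrow> h z = 0"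
  shows "h z = 0"
proof -
  obtain p where p: "\<And>z. h z = poly p z"
    using assms(1) unfolding is_poly_fun_def by blast
  have "S \<subseteq> {x. poly p x = 0}"
    using assms(3) p by auto
  then have "p = 0"
    using assms(2) poly_roots_finite finite_subset by blast
  then show ?thesis
    using p by simp
qed

text \<open>The coordinates \<open>0, \<dots>, K - 1\<close> are freed from \<open>S\<close> one at a time, each step
  being the one-variable fact above.\<close>
lemma separately_poly_eq_0:
  fixes g :: "(nat \<Rightarrow> complex) \<Rightarrow> complex"
  assumes poly: "\<And>u k. is_poly_fun (\<lambda>z. g (u(k := z)))"
    and S: "infinite S"
    and vanish: "\<And>u. \<forall>i<K. u i \<in> S \<Longrightarrow> g u = 0"
  shows "g u = 0"
proof -
  have "\<forall>u. (\<forall>i<K. k \<le> i \<longrightarrow> u i \<in> S) \<longrightarrow> g u = 0" for k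
  proof (induction k)
    case 0
    then show ?case
      using vanish by simp
  next
    case (Suc k)
    show ?case
    proof (intro allI impI)
      fix u
      assume u: "\<forall>i<K. Suc k \<le> i \<longrightarrow> u i \<in> S"
      have "g (u(k := z)) = 0" for z
      proof (rule is_poly_fun_eq_0_on_infinite[OF poly S])
        fix z assume "z \<in> S"
        with u have "\<forall>i<K. k \<le> i \<longrightarrow> (u(k := z)) i \<in> S"
          by (auto simp: Suc_le_eq order.order_iff_strict)
        with Suc.IH show "g (u(k := z)) = 0"
          by blast
      qed
      from this[of "u k"] show "g u = 0"
        by simp
    qed
  qed
  from this[of K] show ?thesis
    by simp
qed

lemma peval_homogeneous_scale:
  assumes "homogeneous f"
  obtains d where "\<And>c x. peval f (\<lambda>v. c * x v) = c ^ d * peval f x"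
proof -
  obtain d where d: "\<And>m. m \<in> Poly_Mapping.keys f \<Longrightarrow>
      (\<Sum>v\<in>Poly_Mapping.keys m. Poly_Mapping.lookup m v) = d"
    using assms unfolding homogeneous_def by blast
  have monomial: "Poly_Mapping.lookup f m * (\<Prod>v\<in>Poly_Mapping.keys m. (c * x v) ^ Poly_Mapping.lookup m v)
      = c ^ d * (Poly_Mapping.lookup f m * (\<Prod>v\<in>Poly_Mapping.keys m. x v ^ Poly_Mapping.lookup m v))"
    if "m \<in> Poly_Mapping.keys f" for m and c :: complex and x
  proof -
    have "(\<Prod>v\<in>Poly_Mapping.keys m. (c * x v) ^ Poly_Mapping.lookup m v)
        = (\<Prod>v\<in>Poly_Mapping.keys m. c ^ Poly_Mapping.lookup m v)
          * (\<Prod>v\<in>Poly_Mapping.keys m. x v ^ Poly_Mapping.lookup m v)"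
      by (simp add: power_mult_distrib prod.distrib)
    also have "(\<Prod>v\<in>Poly_Mapping.keys m. c ^ Poly_Mapping.lookup m v) = c ^ d"
      using d[OF that] by (metis power_sum)
    finally show ?thesis
      by simp
  qed
  have "peval f (\<lambda>v. c * x v) = c ^ d * peval f x" for c x
    unfolding peval_def sum_distrib_left by (rule sum.cong[OF refl monomial])
  then show thesis
    using that by blast
qed

lemma finite_cube: "finite (cube n)"
proof (rule finite_subset)
  show "cube n \<subseteq> {xs. set xs \<subseteq> {0, 1} \<and> length xs = n}"
    unfolding cube_def by (force simp: in_set_conv_nth)
  show "finite {xs. set xs \<subseteq> {0::nat, 1} \<and> length xs = n}"
    by (rule finite_lists_length_eq) simp
qed

lemma replicate_0_in_cube: "replicate n 0 \<in> cube n"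
  unfolding cube_def by simp

lemma prod_power_cube:
  fixes x :: "nat \<Rightarrow> 'a::comm_monoid_mult"
  assumes "v \<in> cube n"
  shows "(\<Prod>i<n. x i ^ (v ! i)) = (\<Prod>i<n. if v ! i = 0 then 1 else x i)"
proof (rule prod.cong[OF refl])
  fix i assume "i \<in> {..<n}"
  then have "v ! i \<le> 1"
    using assms unfolding cube_def by auto
  then show "x i ^ (v ! i) = (if v ! i = 0 then 1 else x i)"
    by (cases "v ! i") auto
qed

definition segre_point :: "nat \<Rightarrow> (nat \<Rightarrow> complex) \<Rightarrow> (nat \<Rightarrow> complex) \<Rightarrow> nat list \<Rightarrow> complex" where
  "segre_point n a b v = (if v \<in> cube n then \<Prod>i<n. if v ! i = 0 then a i else b i else 0)"

lemma segre_eq: "segre n = {segre_point n a b | a b. \<forall>i<n. a i \<noteq> 0 \<or> b i \<noteq> 0}"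
  unfolding segre_def segre_point_def by (auto simp: fun_eq_iff)

lemma segre_point_in_segre: "(\<And>i. i < n \<Longrightarrow> a i \<noteq> 0 \<or> b i \<noteq> 0) \<Longrightarrow> segre_point n a b \<in> segre n"
  unfolding segre_eq by blast

lemma segre_point_cong:
  "(\<And>i. i < n \<Longrightarrow> a i = a' i) \<Longrightarrow> (\<And>i. i < n \<Longrightarrow> b i = b' i) \<Longrightarrow>
    segre_point n a b = segre_point n a' b'"
  unfolding segre_point_def by (intro ext if_cong prod.cong) auto

lemma segre_point_rescale:
  assumes "\<And>i. i < n \<Longrightarrow> a i \<noteq> 0"
  shows "segre_point n a b v = (\<Prod>i<n. a i) * segre_point n (\<lambda>_. 1) (\<lambda>i. b i / a i) v"
proof (cases "v \<in> cube n")
  case True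
  have "(\<Prod>i<n. if v ! i = 0 then a i else b i) = (\<Prod>i<n. a i * (if v ! i = 0 then 1 else b i / a i))"
    using assms by (intro prod.cong) auto
  then show ?thesis
    using True unfolding segre_point_def by (simp add: prod.distrib)
qed (simp add: segre_point_def)

text \<open>Two Segre points with disjoint supports: no point is proportional to both.\<close>
lemma segre_not_proportional:
  fixes t :: "nat list \<Rightarrow> complex"
  assumes "n \<ge> 1" "t \<noteq> (\<lambda>v. 0)"
  obtains e where "e \<in> segre n" "\<forall>c. e \<noteq> (\<lambda>v. c * t v)"
proof -
  define v0 where "v0 = replicate n (0::nat)"
  define v1 where "v1 = (1::nat) # replicate (n - 1) 0"
  define e0 where "e0 = segre_point n (\<lambda>_. 1) (\<lambda>_. 0)"
  define e1 where "e1 = segre_point n (\<lambda>i. if i = 0 then 0 else 1) (\<lambda>i. if i = 0 then 1 else 0)"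
  have v0: "v0 \<in> cube n" and v1: "v1 \<in> cube n"
    using assms(1) unfolding v0_def v1_def cube_def by (auto simp: nth_Cons')
  have e0: "e0 v0 = 1" "e0 v1 = 0"
    using v0 v1 assms(1) unfolding e0_def segre_point_def v0_def v1_def
    by (auto intro!: bexI[of _ 0])
  have e1: "e1 v0 = 0" "e1 v1 = 1"
    using v0 v1 assms(1) unfolding e1_def segre_point_def v0_def v1_def
    by (auto simp: nth_Cons' intro!: bexI[of _ 0] prod.neutral)
  have seg: "e0 \<in> segre n" "e1 \<in> segre n"
    unfolding e0_def e1_def by (auto intro!: segre_point_in_segre split: if_splits)
  show thesis
  proof (cases "\<exists>c. e0 = (\<lambda>v. c * t v)")
    case False
    then show thesis using that seg by blast
  next
    case True
    then obtain c where "e0 = (\<lambda>v. c * t v)" by blast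
    then have "t v0 \<noteq> 0"
      using e0 by (metis mult_zero_right zero_neq_one)
    then have "\<forall>c. e1 \<noteq> (\<lambda>v. c * t v)"
      using e1 by (metis mult_eq_0_iff zero_neq_one)
    then show thesis using that seg by blast
  qed
qed

lemma secant_union_if_combination:
  assumes "n \<ge> 1" "s \<in> segre n" "t \<in> segre n" "x = (\<lambda>v. c1 * s v + c2 * t v)" "\<exists>v. x v \<noteq> 0"
  shows "x \<in> secant_union n"
proof (cases "\<exists>c. s = (\<lambda>v. c * t v)")
  case False
  then show ?thesis
    using assms unfolding secant_union_def by blast
next
  case True
  then obtain c where c: "s = (\<lambda>v. c * t v)" by blast
  then have x: "x = (\<lambda>v. 0 * e v + (c1 * c + c2) * t v)" for e
    using assms(4) by (simp add: fun_eq_iff algebra_simps)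
  then have "t \<noteq> (\<lambda>v. 0)"
    using assms(5) by auto
  then obtain e where "e \<in> segre n" "\<forall>c. e \<noteq> (\<lambda>v. c * t v)"
    using segre_not_proportional assms(1) by blast
  then show ?thesis
    using assms(3,5) x[of e] unfolding secant_union_def by blast
qed

definition rbm_weight :: "nat \<Rightarrow> (nat \<Rightarrow> real) \<Rightarrow> (nat \<Rightarrow> real) \<Rightarrow> real \<Rightarrow> nat list \<Rightarrow> real" where
  "rbm_weight n \<beta> \<omega> \<gamma> v = (\<Prod>i<n. \<beta> i ^ (v ! i)) * (1 + \<gamma> * (\<Prod>i<n. \<omega> i ^ (v ! i)))"

lemma mem_rbm_model:
  "p \<in> rbm_model n \<longleftrightarrow> (\<exists>\<beta> \<omega> \<gamma>. (\<forall>i<n. \<beta> i > 0 \<and> \<omega> i > 0) \<and> \<gamma> > 0 \<and>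
     p = (\<lambda>v. if v \<in> cube n
              then complex_of_real (rbm_weight n \<beta> \<omega> \<gamma> v / (\<Sum>w\<in>cube n. rbm_weight n \<beta> \<omega> \<gamma> w))
              else 0))"
  unfolding rbm_model_def rbm_weight_def Let_def by simp

lemma rbm_weight_pos:
  "(\<And>i. i < n \<Longrightarrow> \<beta> i > 0 \<and> \<omega> i > 0) \<Longrightarrow> \<gamma> > 0 \<Longrightarrow> rbm_weight n \<beta> \<omega> \<gamma> v > 0"
  unfolding rbm_weight_def by (auto intro!: prod_pos mult_pos_pos add_pos_pos)

lemma rbm_partition_pos:
  "(\<And>i. i < n \<Longrightarrow> \<beta> i > 0 \<and> \<omega> i > 0) \<Longrightarrow> \<gamma> > 0 \<Longrightarrow> (\<Sum>w\<in>cube n. rbm_weight n \<beta> \<omega> \<gamma> w) > 0"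
  using replicate_0_in_cube[of n] by (intro sum_pos finite_cube rbm_weight_pos) auto

lemma rbm_weight_eq_segre_combination:
  assumes v: "v \<in> cube n"
  shows "complex_of_real (rbm_weight n \<beta> \<omega> \<gamma> v)
    = segre_point n (\<lambda>_. 1) (\<lambda>i. of_real (\<beta> i)) v
      + of_real \<gamma> * segre_point n (\<lambda>_. 1) (\<lambda>i. of_real (\<beta> i * \<omega> i)) v"
proof -
  have "(\<Prod>i<n. \<beta> i ^ (v ! i)) * (\<Prod>i<n. \<omega> i ^ (v ! i)) = (\<Prod>i<n. (\<beta> i * \<omega> i) ^ (v ! i))"
    by (simp add: power_mult_distrib prod.distrib)
  then have weight: "rbm_weight n \<beta> \<omega> \<gamma> v
      = (\<Prod>i<n. if v ! i = 0 then 1 else \<beta> i) + \<gamma> * (\<Prod>i<n. if v ! i = 0 then 1 else \<beta> i * \<omega> i)"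
    unfolding rbm_weight_def prod_power_cube[OF v, symmetric] by (simp add: algebra_simps)
  have of_real_prod_cube: "complex_of_real (\<Prod>i<n. if v ! i = 0 then 1 else x i)
      = (\<Prod>i<n. if v ! i = 0 then 1 else of_real (x i))" for x
    unfolding of_real_prod by (rule prod.cong) auto
  show ?thesis
    by (simp only: weight of_real_add of_real_mult of_real_prod_cube segre_point_def v if_True)
qed

lemma rbm_model_subset_secant_union:
  assumes "n \<ge> 1"
  shows "rbm_model n \<subseteq> secant_union n"
proof
  fix p assume "p \<in> rbm_model n"
  then obtain \<beta> \<omega> \<gamma> where pos: "\<forall>i<n. \<beta> i > 0 \<and> \<omega> i > 0" "\<gamma> > 0"
    and p: "p = (\<lambda>v. if v \<in> cube n
              then complex_of_real (rbm_weight n \<beta> \<omega> \<gamma> v / (\<Sum>w\<in>cube n. rbm_weight n \<beta> \<omega> \<gamma> w))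
              else 0)"
    unfolding mem_rbm_model by blast
  define Z where "Z = (\<Sum>w\<in>cube n. rbm_weight n \<beta> \<omega> \<gamma> w)"
  define s where "s = segre_point n (\<lambda>_. 1) (\<lambda>i. of_real (\<beta> i))"
  define t where "t = segre_point n (\<lambda>_. 1) (\<lambda>i. of_real (\<beta> i * \<omega> i))"
  have "p = (\<lambda>v. of_real (1 / Z) * s v + of_real (\<gamma> / Z) * t v)"
  proof
    fix v
    show "p v = of_real (1 / Z) * s v + of_real (\<gamma> / Z) * t v"
    proof (cases "v \<in> cube n")
      case True
      then have "p v = complex_of_real (rbm_weight n \<beta> \<omega> \<gamma> v) / of_real Z"
        by (simp add: p Z_def)
      also have "\<dots> = (s v + of_real \<gamma> * t v) / of_real Z"
        using rbm_weight_eq_segre_combination[OF True] by (simp add: s_def t_def)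
      finally show ?thesis
        by (simp add: add_divide_distrib)
    qed (simp add: p s_def t_def segre_point_def)
  qed
  moreover have "p (replicate n 0) \<noteq> 0"
    using pos rbm_weight_pos[of n \<beta> \<omega> \<gamma>] rbm_partition_pos[of n \<beta> \<omega> \<gamma>] replicate_0_in_cube[of n]
    by (simp add: p less_imp_neq[symmetric] del: of_real_sum)
  moreover have "s \<in> segre n" "t \<in> segre n"
    unfolding s_def t_def by (auto intro: segre_point_in_segre)
  ultimately show "p \<in> secant_union n"
    using secant_union_if_combination[OF assms] by blast
qed

text \<open>Parametrization of the cone over the secant variety: the coordinates \<open>u 0, \<dots>, u (4*n-1)\<close>
  are the homogeneous coordinates of two points of \<open>(\<P>\<^sup>1)\<^sup>n\<close>, and \<open>u (4*n)\<close>, \<open>u (4*n+1)\<close>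
  the coefficients of the combination.\<close>
definition secant_param :: "nat \<Rightarrow> (nat \<Rightarrow> complex) \<Rightarrow> nat list \<Rightarrow> complex" where
  "secant_param n u v = u (4*n) * segre_point n u (\<lambda>i. u (n+i)) v
     + u (4*n+1) * segre_point n (\<lambda>i. u (2*n+i)) (\<lambda>i. u (3*n+i)) v"

lemma secant_union_subset_range_secant_param: "secant_union n \<subseteq> range (secant_param n)"
proof
  fix x assume "x \<in> secant_union n"
  then obtain a b a' b' c1 c2
    where x: "x = (\<lambda>v. c1 * segre_point n a b v + c2 * segre_point n a' b' v)"
    unfolding secant_union_def segre_eq by blast
  define u where "u j = (if j < n then a j else if j < 2*n then b (j-n) else if j < 3*n then a' (j-2*n)
     else if j < 4*n then b' (j-3*n) else if j = 4*n then c1 else c2)" for j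
  have "segre_point n u (\<lambda>i. u (n+i)) = segre_point n a b"
    "segre_point n (\<lambda>i. u (2*n+i)) (\<lambda>i. u (3*n+i)) = segre_point n a' b'"
    by (auto intro: segre_point_cong simp: u_def)
  then have "x = secant_param n u"
    unfolding x secant_param_def by (simp add: u_def)
  then show "x \<in> range (secant_param n)" by blast
qed

lemma secant_param_positive:
  assumes u: "\<forall>i<4*n+2. u i \<in> complex_of_real ` {0<..}"
  shows "\<exists>p\<in>rbm_model n. \<exists>L>0. secant_param n u = (\<lambda>v. of_real L * p v)"
proof -
  define r where "r i = Re (u i)" for i
  have ur: "u i = of_real (r i)" and rpos: "r i > 0" if "i < 4*n+2" for i
    using u that unfolding r_def by auto
  have unz: "u i \<noteq> 0" if "i < 4*n+2" for i
    using ur[OF that] rpos[OF that] by simp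
  define \<beta> where "\<beta> i = r (n+i) / r i" for i
  define \<omega> where "\<omega> i = (r (3*n+i) / r (2*n+i)) / \<beta> i" for i
  define A where "A = r (4*n) * (\<Prod>i<n. r i)"
  define \<gamma> where "\<gamma> = r (4*n+1) * (\<Prod>i<n. r (2*n+i)) / A"
  have pos: "\<beta> i > 0 \<and> \<omega> i > 0" if "i < n" for i
    using rpos[of i] rpos[of "n+i"] rpos[of "2*n+i"] rpos[of "3*n+i"] that
    unfolding \<beta>_def \<omega>_def by auto
  have \<beta>_nonzero: "\<beta> i \<noteq> 0" if "i < n" for i
    using pos[OF that] by simp
  have "(\<Prod>i<n. r i) > 0" "(\<Prod>i<n. r (2*n+i)) > 0"
    using rpos by (auto intro!: prod_pos)
  then have "A > 0" "\<gamma> > 0"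
    using rpos[of "4*n"] rpos[of "4*n+1"] unfolding A_def \<gamma>_def by auto
  define Z where "Z = (\<Sum>w\<in>cube n. rbm_weight n \<beta> \<omega> \<gamma> w)"
  have "Z > 0"
    unfolding Z_def using pos \<open>\<gamma> > 0\<close> by (rule rbm_partition_pos)
  define p where "p = (\<lambda>v. if v \<in> cube n then complex_of_real (rbm_weight n \<beta> \<omega> \<gamma> v / Z) else 0)"
  have "p \<in> rbm_model n"
    unfolding mem_rbm_model p_def Z_def using pos \<open>\<gamma> > 0\<close> by blast
  have first: "segre_point n u (\<lambda>i. u (n+i)) v
      = of_real (\<Prod>i<n. r i) * segre_point n (\<lambda>_. 1) (\<lambda>i. of_real (\<beta> i)) v" for v
  proof -
    have "segre_point n u (\<lambda>i. u (n+i)) v = (\<Prod>i<n. u i) * segre_point n (\<lambda>_. 1) (\<lambda>i. u (n+i) / u i) v"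
      using unz by (intro segre_point_rescale) simp
    also have "\<dots> = of_real (\<Prod>i<n. r i) * segre_point n (\<lambda>_. 1) (\<lambda>i. of_real (\<beta> i)) v"
      using ur unfolding \<beta>_def of_real_prod
      by (auto intro!: arg_cong2[where f = "(*)"] prod.cong fun_cong[OF segre_point_cong])
    finally show ?thesis .
  qed
  have second: "segre_point n (\<lambda>i. u (2*n+i)) (\<lambda>i. u (3*n+i)) v
      = of_real (\<Prod>i<n. r (2*n+i)) * segre_point n (\<lambda>_. 1) (\<lambda>i. of_real (\<beta> i * \<omega> i)) v" for v
  proof -
    have "segre_point n (\<lambda>i. u (2*n+i)) (\<lambda>i. u (3*n+i)) v
        = (\<Prod>i<n. u (2*n+i)) * segre_point n (\<lambda>_. 1) (\<lambda>i. u (3*n+i) / u (2*n+i)) v"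
      using unz by (intro segre_point_rescale) simp
    also have "\<dots> = of_real (\<Prod>i<n. r (2*n+i)) * segre_point n (\<lambda>_. 1) (\<lambda>i. of_real (\<beta> i * \<omega> i)) v"
      using ur \<beta>_nonzero unfolding \<omega>_def of_real_prod
      by (auto intro!: arg_cong2[where f = "(*)"] prod.cong fun_cong[OF segre_point_cong])
    finally show ?thesis .
  qed
  have coefficients: "u (4*n) = of_real (r (4*n))" "u (4*n+1) = of_real (r (4*n+1))"
    using ur by auto
  have A: "of_real (r (4*n)) * of_real (\<Prod>i<n. r i) = complex_of_real A"
    unfolding A_def by (simp only: of_real_mult)
  have A\<gamma>: "of_real (r (4*n+1)) * of_real (\<Prod>i<n. r (2*n+i)) = complex_of_real A * of_real \<gamma>"
    using \<open>A > 0\<close> unfolding \<gamma>_def of_real_mult[symmetric] by (simp del: of_real_mult of_real_prod)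
  have combination: "secant_param n u v = of_real A * (segre_point n (\<lambda>_. 1) (\<lambda>i. of_real (\<beta> i)) v
      + of_real \<gamma> * segre_point n (\<lambda>_. 1) (\<lambda>i. of_real (\<beta> i * \<omega> i)) v)" for v
    unfolding secant_param_def first second coefficients mult.assoc[symmetric] A A\<gamma>
    by (simp only: mult.assoc distrib_left)
  have "secant_param n u v = of_real (A * Z) * p v" for v
  proof (cases "v \<in> cube n")
    case True
    then show ?thesis
      using \<open>Z > 0\<close> unfolding combination p_def rbm_weight_eq_segre_combination[OF True, symmetric]
      by simp
  qed (simp add: secant_param_def segre_point_def p_def)
  then show ?thesis
    using \<open>p \<in> rbm_model n\<close> \<open>A > 0\<close> \<open>Z > 0\<close> by (intro bexI[of _ p] exI[of _ "A * Z"]) auto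
qed

lemma peval_secant_param_eq_0:
  assumes hom: "homogeneous f" and vanish: "\<forall>p\<in>rbm_model n. peval f p = 0"
  shows "peval f (secant_param n u) = 0"
proof -
  obtain d where d: "\<And>c x. peval f (\<lambda>v. c * x v) = c ^ d * peval f x"
    using peval_homogeneous_scale[OF hom] by blast
  show ?thesis
  proof (rule separately_poly_eq_0[where g = "\<lambda>u. peval f (secant_param n u)"])
    show "is_poly_fun (\<lambda>z. peval f (secant_param n (u(k := z))))" for u k
      unfolding secant_param_def segre_point_def
      by (intro is_poly_fun_peval is_poly_fun_add is_poly_fun_mult is_poly_fun_if is_poly_fun_prod
          is_poly_fun_fun_upd is_poly_fun_const)
    show "infinite (complex_of_real ` {0<..})"
      using infinite_Ioi[of "0::real"] by (auto dest!: finite_imageD simp: inj_on_def)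
    show "peval f (secant_param n u) = 0" if "\<forall>i<4*n+2. u i \<in> complex_of_real ` {0<..}" for u
      using secant_param_positive[OF that] d vanish by auto
  qed
qed

lemma homogeneous_vanishing_rbm_model_iff_secant_union:
  assumes "n \<ge> 1" "homogeneous f"
  shows "(\<forall>y\<in>rbm_model n. peval f y = 0) \<longleftrightarrow> (\<forall>y\<in>secant_union n. peval f y = 0)"
  using rbm_model_subset_secant_union[OF assms(1)] secant_union_subset_range_secant_param[of n]
    peval_secant_param_eq_0[OF assms(2)] by blast

lemma zariski_closure_cong:
  assumes "\<And>f. poly_in n f \<Longrightarrow> homogeneous f \<Longrightarrow>
      (\<forall>y\<in>S. peval f y = 0) \<longleftrightarrow> (\<forall>y\<in>T. peval f y = 0)"
  shows "zariski_closure n S = zariski_closure n T"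
  unfolding zariski_closure_def using assms by blast

theorem corollary3p2:
  fixes n :: nat
  assumes "n \<ge> 1"
  shows "rbm_variety n = secant_variety n \<and>
         tropicalization n (rbm_variety n) = tropicalization n (secant_variety n)"
proof -
  have "rbm_variety n = secant_variety n"
    unfolding rbm_variety_def secant_variety_def
    using homogeneous_vanishing_rbm_model_iff_secant_union[OF assms] by (rule zariski_closure_cong)
  then show ?thesis
    by simp
qed

end
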